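(* Any categorial sequential allocation mechanism with all agents optimistic has worst-case egalitarian rank equal to $n^p$ (the largest possible).
   Context: Basic categorized domain: $n$ agents, $p$ categories $D_i=\{1,\ldots,n\}$ of indivisible items, bundles $\mathfrak D=D_1\times\cdots\times D_p$; each agent $j$ has a linear order $R_j$ over $\mathfrak D$; a profile is $P_n=(R_1,\ldots,R_n)$. $\mathrm{Rank}(R,\vec d)$ is the position of $\vec d$ in $R$ (top $=1$, bottom $=n^p$). CSAM $f_\mathcal O$: given a linear order $\mathcal O$ over $\{1,\ldots,n\}\times\{1,\ldots,p\}$, in rounds $t=1,\ldots,np$, if the $t$-th element of $\mathcal O$ is $(j,i)$ then agent $j$ chooses an item $d_{j,i}$ from $D_{i,t}$, the items of $D_i$ not yet chosen at the start of round $t$. Agent $j$ receives $f^j_\mathcal O(P_n)=(d_{j,1},\ldots,d_{j,p})$. An optimistic agent $j$ choosing from $D_i$ in round $t$ picks the $i$-th component of her top-ranked bundle among available bundles, where a bundle is available to her if for each category $l$ from which she has already chosen its $l$-th component equals $d_{j,l}$, and for each other category $l$ its $l$-th component lies in $D_{l,t}$. Worst-case egalitarian rank: $\max_{P_n}\max_{j}\mathrm{Rank}(R_j,f^j_\mathcal O(P_n))$ over all profiles of $n$ agents. *)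

theory Defs
  imports Main "HOL-Library.FuncSet"
begin

text \<open>Agents are 1..n, categories are 1..p, the items of each category D_i are 1..n.
  A bundle is an (extensional) function on the categories 1..p with values in 1..n.\<close>

definition bundles :: "nat \<Rightarrow> nat \<Rightarrow> (nat \<Rightarrow> nat) set" where
  "bundles n p = PiE {1..p} (\<lambda>_. {1..n})"

text \<open>A linear order over the bundles is represented by the list of all bundles,
  from the top-ranked one (first) to the bottom-ranked one (last).\<close>

definition is_linear_order :: "nat \<Rightarrow> nat \<Rightarrow> (nat \<Rightarrow> nat) list \<Rightarrow> bool" where
  "is_linear_order n p R \<longleftrightarrow> distinct R \<and> set R = bundles n p"

definition Rank :: "(nat \<Rightarrow> nat) list \<Rightarrow> (nat \<Rightarrow> nat) \<Rightarrow> nat" where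
  "Rank R d = length (takeWhile (\<lambda>x. x \<noteq> d) R) + 1"

definition is_profile :: "nat \<Rightarrow> nat \<Rightarrow> (nat \<Rightarrow> (nat \<Rightarrow> nat) list) \<Rightarrow> bool" where
  "is_profile n p P \<longleftrightarrow> (\<forall>j\<in>{1..n}. is_linear_order n p (P j))"

definition is_csam_order :: "nat \<Rightarrow> nat \<Rightarrow> (nat \<times> nat) list \<Rightarrow> bool" where
  "is_csam_order n p Ord \<longleftrightarrow> distinct Ord \<and> set Ord = {1..n} \<times> {1..p}"

text \<open>State of the mechanism: A j l = Some d iff agent j has already chosen item d
  from category l.\<close>

type_synonym alloc_state = "nat \<Rightarrow> nat \<Rightarrow> nat option"

definition remaining :: "nat \<Rightarrow> alloc_state \<Rightarrow> nat \<Rightarrow> nat set" where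
  "remaining n A l = {d \<in> {1..n}. \<not> (\<exists>j. A j l = Some d)}"

definition available_bundle :: "nat \<Rightarrow> nat \<Rightarrow> alloc_state \<Rightarrow> nat \<Rightarrow> (nat \<Rightarrow> nat) \<Rightarrow> bool" where
  "available_bundle n p A j b \<longleftrightarrow> b \<in> bundles n p \<and>
     (\<forall>l\<in>{1..p}. (case A j l of Some x \<Rightarrow> b l = x | None \<Rightarrow> b l \<in> remaining n A l))"

definition optimistic_choice ::
  "nat \<Rightarrow> nat \<Rightarrow> (nat \<Rightarrow> (nat \<Rightarrow> nat) list) \<Rightarrow> alloc_state \<Rightarrow> nat \<Rightarrow> nat \<Rightarrow> nat" where
  "optimistic_choice n p P A j i = hd (filter (available_bundle n p A j) (P j)) i"

definition csam_step ::
  "nat \<Rightarrow> nat \<Rightarrow> (nat \<Rightarrow> (nat \<Rightarrow> nat) list) \<Rightarrow> alloc_state \<Rightarrow> nat \<times> nat \<Rightarrow> alloc_state" where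
  "csam_step n p P A ji = (case ji of (j, i) \<Rightarrow>
      A(j := (A j)(i := Some (optimistic_choice n p P A j i))))"

definition csam_run ::
  "nat \<Rightarrow> nat \<Rightarrow> (nat \<times> nat) list \<Rightarrow> (nat \<Rightarrow> (nat \<Rightarrow> nat) list) \<Rightarrow> alloc_state" where
  "csam_run n p Ord P = foldl (csam_step n p P) (\<lambda>_ _. None) Ord"

definition csam_alloc ::
  "nat \<Rightarrow> nat \<Rightarrow> (nat \<times> nat) list \<Rightarrow> (nat \<Rightarrow> (nat \<Rightarrow> nat) list) \<Rightarrow> nat \<Rightarrow> (nat \<Rightarrow> nat)" where
  "csam_alloc n p Ord P j = (\<lambda>i. if i \<in> {1..p} then the (csam_run n p Ord P j i) else undefined)"

definition worst_case_egalitarian_rank :: "nat \<Rightarrow> nat \<Rightarrow> (nat \<times> nat) list \<Rightarrow> nat" where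
  "worst_case_egalitarian_rank n p Ord =
     Max {Rank (P j) (csam_alloc n p Ord P j) | P j. is_profile n p P \<and> j \<in> {1..n}}"

end

theory Submission
  imports Defs
begin

text \<open>Call step t of the order cornered if a rival of the agent picking at step t has not
  yet picked from the current category, while every later category of that agent has already
  been picked by all her rivals. Some agent j0 is never cornered: otherwise, at the last cornered
  step T, a rival a of the agent j picking category f at T picks from f only after T, yet at
  a's own (earlier) cornered step all rivals of a, including j, had already picked from f.

  Let all agents other than j0 rank bundles by their number of components equal to 1, fewest
  first, and let j0 rank the all-ones bundle last and the other bundles by the total weight of
  the categories where they differ from 1, a category weighing more the earlier j0 picks from
  it. By induction over the rounds, no rival takes item 1 of a category before j0 has picked
  from it (a rival would rather swap it for a spare item), and j0 always picks item 1: if all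
  her rivals have already picked her current category, item 1 is the only item left; otherwise,
  as she is not cornered, a later category of hers still has a spare item, and deviating from 1
  only there beats every bundle deviating in the current category. So j0 receives her bottom
  bundle, of rank n^p, the largest rank possible.\<close>

section \<open>Runs of the mechanism\<close>

abbreviation run_prefix ::
  "nat \<Rightarrow> nat \<Rightarrow> (nat \<Rightarrow> (nat \<Rightarrow> nat) list) \<Rightarrow> (nat \<times> nat) list \<Rightarrow> nat \<Rightarrow> alloc_state" where
  "run_prefix n p P Ord t \<equiv> foldl (csam_step n p P) (\<lambda>_ _. None) (take t Ord)"

lemma run_prefix_Suc:
  "t < length Ord \<Longrightarrow>
    run_prefix n p P Ord (Suc t) = csam_step n p P (run_prefix n p P Ord t) (Ord ! t)"
  by (simp add: take_Suc_conv_app_nth)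

lemma csam_run_eq_run_prefix: "csam_run n p Ord P = run_prefix n p P Ord (length Ord)"
  by (simp add: csam_run_def)

lemma csam_step_apply:
  "csam_step n p P A (j, i) j' l =
    (if j' = j \<and> l = i then Some (optimistic_choice n p P A j i) else A j' l)"
  by (simp add: csam_step_def)

definition consistent_state :: "nat \<Rightarrow> alloc_state \<Rightarrow> (nat \<times> nat) set \<Rightarrow> bool" where
  "consistent_state n A S \<longleftrightarrow> (\<forall>j l. A j l \<noteq> None \<longleftrightarrow> (j, l) \<in> S) \<and>
     (\<forall>j l d. A j l = Some d \<longrightarrow> d \<in> {1..n}) \<and>
     (\<forall>j1 j2 l d. A j1 l = Some d \<longrightarrow> A j2 l = Some d \<longrightarrow> j1 = j2)"

lemma
  assumes "consistent_state n A S"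
  shows consistent_state_defined: "A j l \<noteq> None \<longleftrightarrow> (j, l) \<in> S"
    and consistent_state_undefined: "A j l = None \<longleftrightarrow> (j, l) \<notin> S"
    and consistent_state_item: "A j l = Some d \<Longrightarrow> d \<in> {1..n}"
    and consistent_state_unique: "A j1 l = Some d \<Longrightarrow> A j2 l = Some d \<Longrightarrow> j1 = j2"
  using assms unfolding consistent_state_def by blast+

lemma card_remaining_ge:
  assumes agents: "\<And>j. A j l \<noteq> None \<Longrightarrow> j \<in> {1..n}"
    and Y: "Y \<subseteq> {1..n}" and unpicked: "\<And>j. j \<in> Y \<Longrightarrow> A j l = None"
  shows "card Y \<le> card (remaining n A l)"
proof -
  let ?taken = "{d \<in> {1..n}. \<exists>j. A j l = Some d}"
  have "?taken \<subseteq> (\<lambda>j. the (A j l)) ` ({1..n} - Y)"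
    using agents unpicked by force
  hence "card ?taken \<le> card ({1..n} - Y)"
    by (meson card_image_le card_mono finite_Diff finite_atLeastAtMost finite_imageI le_trans)
  moreover have "remaining n A l = {1..n} - ?taken"
    unfolding remaining_def by blast
  moreover have "card ({1..n} - ?taken) = card {1..n} - card ?taken"
    by (rule card_Diff_subset) auto
  moreover have "card Y \<le> n"
    using card_mono[OF finite_atLeastAtMost Y] by simp
  ultimately show ?thesis
    using Y by (simp add: card_Diff_subset finite_subset)
qed

lemma card_remaining_le:
  assumes A: "consistent_state n A S" and Y: "finite Y"
    and picked: "\<And>j. j \<in> Y \<Longrightarrow> A j l \<noteq> None"
  shows "card Y + card (remaining n A l) \<le> n"
proof -
  let ?item = "\<lambda>j. the (A j l)"
  have "inj_on ?item Y"
    by (rule inj_onI) (metis picked option.collapse consistent_state_unique[OF A])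
  hence "card Y + card (remaining n A l) = card (?item ` Y \<union> remaining n A l)"
    using Y picked by (subst card_Un_disjoint) (force simp: remaining_def card_image)+
  also have "\<dots> \<le> card {1..n}"
    using picked consistent_state_item[OF A]
    by (intro card_mono) (force simp: remaining_def)+
  finally show ?thesis by simp
qed

lemma remaining_nonempty:
  assumes "\<And>j'. A j' l \<noteq> None \<Longrightarrow> j' \<in> {1..n}" and "j \<in> {1..n}" and "A j l = None"
  shows "remaining n A l \<noteq> {}"
  using card_remaining_ge[of A l n "{j}"] assms by force

lemma remaining_ex_ne_one:
  assumes "\<And>j'. A j' l \<noteq> None \<Longrightarrow> j' \<in> {1..n}"
    and "j1 \<in> {1..n}" "j2 \<in> {1..n}" "j1 \<noteq> j2" "A j1 l = None" "A j2 l = None"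
  shows "\<exists>d\<in>remaining n A l. d \<noteq> 1"
proof (rule ccontr)
  assume "\<not> ?thesis"
  hence "card (remaining n A l) \<le> card {1::nat}"
    by (intro card_mono) auto
  moreover have "card {j1, j2} \<le> card (remaining n A l)"
    using assms by (intro card_remaining_ge) auto
  ultimately show False
    using assms(4) by simp
qed

lemma fun_upd_in_bundles:
  "b \<in> bundles n p \<Longrightarrow> l \<in> {1..p} \<Longrightarrow> d \<in> {1..n} \<Longrightarrow> b(l := d) \<in> bundles n p"
  unfolding bundles_def by (auto simp: PiE_def extensional_def)

lemma card_bundles: "card (bundles n p) = n ^ p"
  unfolding bundles_def by (simp add: card_PiE)

lemma finite_bundles: "finite (bundles n p)"
  unfolding bundles_def by (simp add: finite_PiE)

lemma ex_available_bundle: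
  assumes A: "consistent_state n A S" and S: "S \<subseteq> {1..n} \<times> {1..p}" and j: "j \<in> {1..n}"
  shows "\<exists>b. available_bundle n p A j b"
proof -
  have agents: "\<And>j' l. A j' l \<noteq> None \<Longrightarrow> j' \<in> {1..n}"
    using S consistent_state_defined[OF A] by blast
  define b where "b l = (if l \<in> {1..p} then (case A j l of Some x \<Rightarrow> x
      | None \<Rightarrow> (SOME d. d \<in> remaining n A l)) else undefined)" for l
  have free: "b l \<in> remaining n A l" if "l \<in> {1..p}" "A j l = None" for l
    using remaining_nonempty[of A l n j, OF agents j] that by (simp add: b_def some_in_eq)
  have "b \<in> bundles n p"
    unfolding bundles_def
  proof (rule PiE_I)
    show "b l \<in> {1..n}" if "l \<in> {1..p}" for l
      using free[OF that] consistent_state_item[OF A, of j l] that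
      by (cases "A j l") (auto simp: b_def remaining_def)
  qed (auto simp: b_def)
  moreover have "case A j l of Some x \<Rightarrow> b l = x | None \<Rightarrow> b l \<in> remaining n A l"
    if "l \<in> {1..p}" for l
    using free[OF that] that by (cases "A j l") (auto simp: b_def)
  ultimately show ?thesis
    unfolding available_bundle_def by blast
qed

lemma top_available_bundle:
  assumes A: "consistent_state n A S" and S: "S \<subseteq> {1..n} \<times> {1..p}" and j: "j \<in> {1..n}"
    and P: "is_profile n p P"
  shows "filter (available_bundle n p A j) (P j) \<noteq> []"
    and "available_bundle n p A j (hd (filter (available_bundle n p A j) (P j)))"
proof -
  obtain b where b: "available_bundle n p A j b"
    using ex_available_bundle[OF A S j] by blast
  moreover have "b \<in> set (P j)"
    using b P j by (simp add: available_bundle_def is_profile_def is_linear_order_def)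
  ultimately show ne: "filter (available_bundle n p A j) (P j) \<noteq> []"
    by (metis filter_empty_conv)
  show "available_bundle n p A j (hd (filter (available_bundle n p A j) (P j)))"
    using hd_in_set[OF ne] by simp
qed

lemma optimistic_choice_remaining:
  assumes A: "consistent_state n A S" and S: "S \<subseteq> {1..n} \<times> {1..p}" and j: "j \<in> {1..n}"
    and P: "is_profile n p P" and i: "i \<in> {1..p}" and unpicked: "A j i = None"
  shows "optimistic_choice n p P A j i \<in> remaining n A i"
  using top_available_bundle(2)[OF A S j P] i unpicked
  unfolding available_bundle_def optimistic_choice_def by fastforce

lemma available_bundle_fun_upd:
  assumes "available_bundle n p A j b" and "i \<in> {1..p}" and "A j i = None"
    and "d \<in> remaining n A i"
  shows "available_bundle n p A j (b(i := d))"
  unfolding available_bundle_def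
proof (intro conjI ballI)
  show "b(i := d) \<in> bundles n p"
    using assms fun_upd_in_bundles[of b n p i d] by (auto simp: available_bundle_def remaining_def)
  fix l assume "l \<in> {1..p}"
  hence "case A j l of None \<Rightarrow> b l \<in> remaining n A l | Some x \<Rightarrow> b l = x"
    using assms(1) unfolding available_bundle_def by blast
  thus "case A j l of None \<Rightarrow> (b(i := d)) l \<in> remaining n A l | Some x \<Rightarrow> (b(i := d)) l = x"
    using assms(3,4) by (cases "l = i") (auto split: option.splits)
qed

lemma consistent_state_step:
  assumes A: "consistent_state n A S" and S: "S \<subseteq> {1..n} \<times> {1..p}" and j: "j \<in> {1..n}"
    and P: "is_profile n p P" and i: "i \<in> {1..p}" and new: "(j, i) \<notin> S"
  shows "consistent_state n (csam_step n p P A (j, i)) (insert (j, i) S)"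
proof -
  have "A j i = None"
    using consistent_state_defined[OF A] new by blast
  hence "optimistic_choice n p P A j i \<in> remaining n A i"
    by (rule optimistic_choice_remaining[OF A S j P i])
  thus ?thesis
    using A unfolding consistent_state_def csam_step_apply remaining_def
    by (auto split: if_splits)
qed

lemma csam_order_nth:
  "is_csam_order n p Ord \<Longrightarrow> t < length Ord \<Longrightarrow> Ord ! t \<in> {1..n} \<times> {1..p}"
  unfolding is_csam_order_def using nth_mem by blast

lemma nth_notin_set_take:
  "distinct xs \<Longrightarrow> t \<le> u \<Longrightarrow> u < length xs \<Longrightarrow> xs ! u \<notin> set (take t xs)"
  by (auto simp: in_set_conv_nth nth_eq_iff_index_eq)

lemma hd_filter_key_le:
  assumes "sorted (map k ys)" and "y \<in> set ys" and "Q y"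
  shows "k (hd (filter Q ys)) \<le> k y"
proof -
  have "sorted (map k (filter Q ys))" and "y \<in> set (filter Q ys)"
    using assms sorted_filter by auto
  thus ?thesis
    by (cases "filter Q ys") auto
qed

lemma consistent_run_prefix:
  assumes P: "is_profile n p P" and O: "is_csam_order n p Ord" and t: "t \<le> length Ord"
  shows "consistent_state n (run_prefix n p P Ord t) (set (take t Ord))"
  using t
proof (induction t)
  case 0
  show ?case by (simp add: consistent_state_def)
next
  case (Suc t)
  hence t: "t < length Ord" by simp
  obtain j i where ji: "Ord ! t = (j, i)" by fastforce
  have "(j, i) \<in> {1..n} \<times> {1..p}"
    using csam_order_nth[OF O t] ji by simp
  moreover have "set (take t Ord) \<subseteq> {1..n} \<times> {1..p}"
    using set_take_subset[of t Ord] O unfolding is_csam_order_def by blast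
  moreover have "(j, i) \<notin> set (take t Ord)"
    using nth_notin_set_take[of Ord t t] O t ji unfolding is_csam_order_def by simp
  ultimately show ?case
    using consistent_state_step[OF Suc.IH[OF less_imp_le[OF t]] _ _ P] run_prefix_Suc[OF t] ji t
    by (simp add: take_Suc_conv_app_nth)
qed

lemma csam_alloc_in_bundles:
  assumes P: "is_profile n p P" and O: "is_csam_order n p Ord" and j: "j \<in> {1..n}"
  shows "csam_alloc n p Ord P j \<in> bundles n p"
proof -
  have A: "consistent_state n (csam_run n p Ord P) (set Ord)"
    using consistent_run_prefix[OF P O, of "length Ord"] by (simp add: csam_run_eq_run_prefix)
  have "the (csam_run n p Ord P j l) \<in> {1..n}" if "l \<in> {1..p}" for l
  proof -
    have "(j, l) \<in> set Ord"
      using O j that unfolding is_csam_order_def by simp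
    then obtain d where "csam_run n p Ord P j l = Some d"
      using consistent_state_defined[OF A] by blast
    thus ?thesis
      using consistent_state_item[OF A] by simp
  qed
  thus ?thesis
    unfolding bundles_def csam_alloc_def by (auto simp del: atLeastAtMost_iff)
qed

lemma Rank_le_length: "d \<in> set R \<Longrightarrow> Rank R d \<le> length R"
  unfolding Rank_def by (induction R) auto

lemma length_linear_order: "is_linear_order n p R \<Longrightarrow> length R = n ^ p"
  unfolding is_linear_order_def by (metis card_bundles distinct_card)

lemma Rank_csam_alloc_le:
  assumes P: "is_profile n p P" and O: "is_csam_order n p Ord" and j: "j \<in> {1..n}"
  shows "Rank (P j) (csam_alloc n p Ord P j) \<le> n ^ p"
proof -
  have "is_linear_order n p (P j)"
    using P j unfolding is_profile_def by blast
  thus ?thesis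
    using Rank_le_length csam_alloc_in_bundles[OF P O j] length_linear_order
    unfolding is_linear_order_def by metis
qed

section \<open>Cornered picks\<close>

definition pending_rival :: "nat \<Rightarrow> (nat \<times> nat) list \<Rightarrow> nat \<Rightarrow> nat \<Rightarrow> bool" where
  "pending_rival n Ord t l \<longleftrightarrow> (\<exists>a\<in>{1..n}. a \<noteq> fst (Ord ! t) \<and> (a, l) \<notin> set (take t Ord))"

definition cornered_at :: "nat \<Rightarrow> (nat \<times> nat) list \<Rightarrow> nat \<Rightarrow> bool" where
  "cornered_at n Ord t \<longleftrightarrow> pending_rival n Ord t (snd (Ord ! t)) \<and>
     (\<forall>u. t < u \<longrightarrow> u < length Ord \<longrightarrow> fst (Ord ! u) = fst (Ord ! t) \<longrightarrow>
        \<not> pending_rival n Ord t (snd (Ord ! u)))"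

definition never_cornered :: "nat \<Rightarrow> (nat \<times> nat) list \<Rightarrow> nat \<Rightarrow> bool" where
  "never_cornered n Ord j \<longleftrightarrow> (\<forall>t<length Ord. fst (Ord ! t) = j \<longrightarrow> \<not> cornered_at n Ord t)"

lemma ex_never_cornered_agent:
  assumes n: "n \<ge> 1" and O: "is_csam_order n p Ord"
  shows "\<exists>j\<in>{1..n}. never_cornered n Ord j"
proof (rule ccontr)
  assume "\<not> ?thesis"
  hence cornered: "\<exists>t<length Ord. fst (Ord ! t) = j \<and> cornered_at n Ord t" if "j \<in> {1..n}" for j
    using that unfolding never_cornered_def by blast
  have dist: "distinct Ord"
    using O unfolding is_csam_order_def by simp
  define B where "B = {t. t < length Ord \<and> cornered_at n Ord t}"
  have "finite B" "B \<noteq> {}"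
    using cornered[of 1] n unfolding B_def by auto
  define T where "T = Max B"
  have T: "T < length Ord" "cornered_at n Ord T" and T_max: "\<And>s. s \<in> B \<Longrightarrow> s \<le> T"
    using Max_in[OF \<open>finite B\<close> \<open>B \<noteq> {}\<close>] Max_ge[OF \<open>finite B\<close>] unfolding T_def B_def by auto
  obtain j f where jf: "Ord ! T = (j, f)" by fastforce
  have j: "j \<in> {1..n}" and f: "f \<in> {1..p}"
    using csam_order_nth[OF O T(1)] jf by auto
  obtain a where a: "a \<in> {1..n}" "a \<noteq> j" "(a, f) \<notin> set (take T Ord)"
    using T(2) jf unfolding cornered_at_def pending_rival_def by auto
  obtain u where u: "u < length Ord" "Ord ! u = (a, f)"
    using O a(1) f unfolding is_csam_order_def by (metis SigmaI in_set_conv_nth)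
  have "\<not> u < T"
    using a(3) u by (auto simp: in_set_conv_nth)
  moreover have "u \<noteq> T"
    using u jf a(2) by auto
  ultimately have "T < u" by simp
  obtain s where s: "s < length Ord" "fst (Ord ! s) = a" "cornered_at n Ord s"
    using cornered[OF a(1)] by blast
  have "s < T"
    using T_max[of s] s a(2) jf unfolding B_def by (metis fst_conv le_neq_implies_less mem_Collect_eq)
  hence "\<not> pending_rival n Ord s f"
    using s(3) \<open>T < u\<close> u unfolding cornered_at_def s(2)[symmetric]
    by (metis fst_conv snd_conv order.strict_trans)
  hence "(j, f) \<in> set (take s Ord)"
    using j a(2) s(2) unfolding pending_rival_def by metis
  thus False
    using nth_notin_set_take[OF dist less_imp_le[OF \<open>s < T\<close>] T(1)] jf by simp
qed

section \<open>A profile giving an agent her bottom bundle\<close>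

locale bottom_rank_profile =
  fixes n p :: nat and Ord :: "(nat \<times> nat) list" and j0 :: nat and L :: "(nat \<Rightarrow> nat) list"
  assumes n: "n \<ge> 1" and O: "is_csam_order n p Ord" and j0: "j0 \<in> {1..n}"
    and j0_never_cornered: "never_cornered n Ord j0"
    and L: "distinct L" "set L = bundles n p"
begin

definition all_ones :: "nat \<Rightarrow> nat" where
  "all_ones i = (if i \<in> {1..p} then 1 else undefined)"

definition count_ones :: "(nat \<Rightarrow> nat) \<Rightarrow> nat" where
  "count_ones b = card {l \<in> {1..p}. b l = 1}"

definition deviation_weight :: "(nat \<Rightarrow> nat) \<Rightarrow> nat" where
  "deviation_weight b =
     (\<Sum>u<length Ord. if fst (Ord ! u) = j0 \<and> b (snd (Ord ! u)) \<noteq> 1 then length Ord - u else 0)"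

definition deviants :: "(nat \<Rightarrow> nat) list" where
  "deviants = filter (\<lambda>b. b \<noteq> all_ones) (sort_key deviation_weight L)"

definition own_pref :: "(nat \<Rightarrow> nat) list" where
  "own_pref = deviants @ [all_ones]"

definition rival_pref :: "(nat \<Rightarrow> nat) list" where
  "rival_pref = sort_key count_ones L"

definition profile :: "nat \<Rightarrow> (nat \<Rightarrow> nat) list" where
  "profile j = (if j = j0 then own_pref else rival_pref)"

lemma distinct_Ord: "distinct Ord" and set_Ord: "set Ord = {1..n} \<times> {1..p}"
  using O unfolding is_csam_order_def by auto

lemma all_ones_in_bundles: "all_ones \<in> bundles n p"
  using n unfolding all_ones_def bundles_def by auto

lemma set_deviants: "set deviants = bundles n p - {all_ones}"
  unfolding deviants_def using L by auto

lemma sorted_deviants: "sorted (map deviation_weight deviants)"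
  unfolding deviants_def by (rule sorted_filter) (rule sorted_sort_key)

lemma is_profile_profile: "is_profile n p profile"
proof -
  have "is_linear_order n p own_pref"
    using set_deviants all_ones_in_bundles L
    unfolding is_linear_order_def own_pref_def by (auto simp: deviants_def)
  moreover have "is_linear_order n p rival_pref"
    using L unfolding is_linear_order_def rival_pref_def by (simp add: distinct_sort)
  ultimately show ?thesis
    unfolding is_profile_def profile_def by simp
qed

lemma Rank_own_pref_all_ones: "Rank own_pref all_ones = n ^ p"
proof -
  have "takeWhile (\<lambda>x. x \<noteq> all_ones) own_pref = deviants"
    unfolding own_pref_def by (subst takeWhile_append2) (auto simp: deviants_def)
  hence "Rank own_pref all_ones = length own_pref"
    by (simp add: Rank_def own_pref_def)
  thus ?thesis
    using is_profile_profile j0 length_linear_order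
    unfolding is_profile_def profile_def by (metis (full_types))
qed

abbreviation state :: "nat \<Rightarrow> alloc_state" where
  "state t \<equiv> run_prefix n p profile Ord t"

lemma state_consistent: "t \<le> length Ord \<Longrightarrow> consistent_state n (state t) (set (take t Ord))"
  by (rule consistent_run_prefix[OF is_profile_profile O])

lemma taken_subset: "set (take t Ord) \<subseteq> {1..n} \<times> {1..p}"
  using set_take_subset[of t Ord] set_Ord by blast

lemma state_agent: "t \<le> length Ord \<Longrightarrow> state t j l \<noteq> None \<Longrightarrow> j \<in> {1..n}"
  using state_consistent taken_subset consistent_state_defined by blast

lemma
  assumes "t < length Ord" and "Ord ! t = (a, i)"
  shows pick_agent: "a \<in> {1..n}" and pick_category: "i \<in> {1..p}"
    and pick_new: "(a, i) \<notin> set (take t Ord)" and pick_unassigned: "state t a i = None"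
proof -
  show "a \<in> {1..n}" "i \<in> {1..p}"
    using csam_order_nth[OF O assms(1)] assms(2) by auto
  show new: "(a, i) \<notin> set (take t Ord)"
    using nth_notin_set_take[OF distinct_Ord order.refl assms(1)] assms(2) by simp
  show "state t a i = None"
    using consistent_state_undefined[OF state_consistent[OF less_imp_le[OF assms(1)]]] new by simp
qed

definition one_reserved :: "nat \<Rightarrow> bool" where
  "one_reserved t \<longleftrightarrow> (\<forall>l a. (j0, l) \<notin> set (take t Ord) \<longrightarrow> state t a l \<noteq> Some 1) \<and>
     (\<forall>l d. state t j0 l = Some d \<longrightarrow> d = 1)"

lemma one_remaining:
  "one_reserved t \<Longrightarrow> (j0, l) \<notin> set (take t Ord) \<Longrightarrow> 1 \<in> remaining n (state t) l"
  using n unfolding one_reserved_def remaining_def by auto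

lemma all_ones_available:
  assumes t: "t \<le> length Ord" and reserved: "one_reserved t"
  shows "available_bundle n p (state t) j0 all_ones"
  unfolding available_bundle_def
proof (intro conjI ballI all_ones_in_bundles)
  fix l assume l: "l \<in> {1..p}"
  show "case state t j0 l of None \<Rightarrow> all_ones l \<in> remaining n (state t) l | Some x \<Rightarrow> all_ones l = x"
  proof (cases "state t j0 l")
    case None
    hence "(j0, l) \<notin> set (take t Ord)"
      using consistent_state_undefined[OF state_consistent[OF t]] by simp
    thus ?thesis
      using one_remaining[OF reserved] None l by (simp add: all_ones_def)
  qed (use reserved l in \<open>auto simp: one_reserved_def all_ones_def\<close>)
qed

lemma count_ones_fun_upd_less:
  assumes "i \<in> {1..p}" and "b i = 1" and "d \<noteq> 1"
  shows "count_ones (b(i := d)) < count_ones b"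
proof -
  have ones_upd: "{l \<in> {1..p}. (b(i := d)) l = 1} = {l \<in> {1..p}. b l = 1} - {i}"
    using assms(3) by auto
  show ?thesis
    unfolding count_ones_def ones_upd by (rule card_Diff1_less) (use assms(1,2) in auto)
qed

lemma rival_choice_ne_one:
  assumes t: "t < length Ord" and ji: "Ord ! t = (a, i)" and a: "a \<noteq> j0"
    and j0_unpicked: "(j0, i) \<notin> set (take t Ord)"
  shows "optimistic_choice n p profile (state t) a i \<noteq> 1"
proof
  let ?Q = "available_bundle n p (state t) a"
  let ?b = "hd (filter ?Q rival_pref)"
  have rival: "profile a = rival_pref"
    using a by (simp add: profile_def)
  have Q_b: "?Q ?b"
    using top_available_bundle(2)[OF state_consistent[OF less_imp_le[OF t]] taken_subset
        pick_agent[OF t ji] is_profile_profile] unfolding rival .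
  assume "optimistic_choice n p profile (state t) a i = 1"
  hence b_i: "?b i = 1"
    unfolding optimistic_choice_def rival .
  have agents: "\<And>j. state t j i \<noteq> None \<Longrightarrow> j \<in> {1..n}"
    using state_agent[OF less_imp_le[OF t]] by blast
  have "state t j0 i = None"
    using consistent_state_undefined[OF state_consistent[OF less_imp_le[OF t]]] j0_unpicked by simp
  then obtain d where d: "d \<in> remaining n (state t) i" "d \<noteq> 1"
    using remaining_ex_ne_one[of "state t" i n a j0, OF agents pick_agent[OF t ji] j0 a
        pick_unassigned[OF t ji]] by blast
  have Q_upd: "?Q (?b(i := d))"
    using available_bundle_fun_upd[OF Q_b pick_category[OF t ji] pick_unassigned[OF t ji] d(1)] .
  have "?b(i := d) \<in> set (sort_key count_ones L)"
    using L(2) Q_upd unfolding available_bundle_def set_sort by blast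
  from hd_filter_key_le[where Q = ?Q, OF sorted_sort_key this Q_upd]
  have "count_ones ?b \<le> count_ones (?b(i := d))"
    unfolding rival_pref_def .
  moreover have "count_ones (?b(i := d)) < count_ones ?b"
    using count_ones_fun_upd_less[of i ?b d] pick_category[OF t ji] b_i d(2) by blast
  ultimately show False by simp
qed

lemma deviation_weight_ge:
  assumes "t < length Ord" and "Ord ! t = (j0, i)" and "b i \<noteq> 1"
  shows "length Ord - t \<le> deviation_weight b"
  unfolding deviation_weight_def
  using member_le_sum[of t "{..<length Ord}"
      "\<lambda>u. if fst (Ord ! u) = j0 \<and> b (snd (Ord ! u)) \<noteq> 1 then length Ord - u else 0"] assms
  by simp

lemma deviation_weight_single:
  assumes u: "u < length Ord" and ul: "Ord ! u = (j0, l)" and d: "d \<noteq> 1"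
  shows "deviation_weight (all_ones(l := d)) = length Ord - u"
proof -
  have "fst (Ord ! v) = j0 \<and> (all_ones(l := d)) (snd (Ord ! v)) \<noteq> 1 \<longleftrightarrow> v = u"
    if v: "v < length Ord" for v
  proof -
    obtain a k where ak: "Ord ! v = (a, k)" by fastforce
    have "k \<in> {1..p}"
      using pick_category[OF v ak] .
    hence "(all_ones(l := d)) k \<noteq> 1 \<longleftrightarrow> k = l"
      using d by (auto simp: all_ones_def)
    moreover have "Ord ! v = (j0, l) \<longleftrightarrow> v = u"
      using distinct_Ord v u ul nth_eq_iff_index_eq by metis
    ultimately show ?thesis
      using ak by auto
  qed
  hence "deviation_weight (all_ones(l := d)) = (\<Sum>v<length Ord. if v = u then length Ord - u else 0)"
    unfolding deviation_weight_def by (intro sum.cong) auto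
  also have "\<dots> = length Ord - u"
    using u by simp
  finally show ?thesis .
qed

lemma own_choice_one_if_no_pending_rival:
  assumes t: "t < length Ord" and ji: "Ord ! t = (j0, i)" and reserved: "one_reserved t"
    and no_rival: "\<not> pending_rival n Ord t i"
  shows "optimistic_choice n p profile (state t) j0 i = 1"
proof -
  have A: "consistent_state n (state t) (set (take t Ord))"
    using state_consistent t by simp
  have "optimistic_choice n p profile (state t) j0 i \<in> remaining n (state t) i"
    by (rule optimistic_choice_remaining[OF A taken_subset j0 is_profile_profile
          pick_category[OF t ji] pick_unassigned[OF t ji]])
  moreover have "1 \<in> remaining n (state t) i"
    by (rule one_remaining[OF reserved pick_new[OF t ji]])
  moreover have "card ({1..n} - {j0}) + card (remaining n (state t) i) \<le> n"
  proof (rule card_remaining_le[OF A])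
    show "state t j i \<noteq> None" if "j \<in> {1..n} - {j0}" for j
      using that no_rival ji consistent_state_defined[OF A] unfolding pending_rival_def by auto
  qed simp
  hence "card (remaining n (state t) i) \<le> 1"
    using j0 by simp
  ultimately show ?thesis
    using card_le_Suc0_iff_eq[of "remaining n (state t) i"] by (auto simp: remaining_def)
qed

lemma later_spare_item:
  assumes t: "t < length Ord" and ji: "Ord ! t = (j0, i)" and rival: "pending_rival n Ord t i"
  obtains u l d where "t < u" "u < length Ord" "Ord ! u = (j0, l)" "state t j0 l = None"
    "d \<in> remaining n (state t) l" "d \<noteq> 1"
proof -
  obtain u where u: "t < u" "u < length Ord" "fst (Ord ! u) = j0"
    and later_rival: "pending_rival n Ord t (snd (Ord ! u))"
    using j0_never_cornered t ji rival unfolding never_cornered_def cornered_at_def by fastforce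
  define l where "l = snd (Ord ! u)"
  have ul: "Ord ! u = (j0, l)"
    using u(3) unfolding l_def by (metis prod.collapse)
  obtain a where a: "a \<in> {1..n}" "a \<noteq> j0" "(a, l) \<notin> set (take t Ord)"
    using later_rival ji unfolding pending_rival_def l_def by auto
  have A: "consistent_state n (state t) (set (take t Ord))"
    using state_consistent t by simp
  have j0_l: "state t j0 l = None"
    using nth_notin_set_take[OF distinct_Ord less_imp_le[OF u(1)] u(2)] ul
      consistent_state_undefined[OF A] by simp
  have "\<And>j. state t j l \<noteq> None \<Longrightarrow> j \<in> {1..n}"
    using state_agent[OF less_imp_le[OF t]] by blast
  moreover have "state t a l = None"
    using a(3) consistent_state_undefined[OF A] by simp
  ultimately obtain d where "d \<in> remaining n (state t) l" "d \<noteq> 1"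
    using remaining_ex_ne_one[of "state t" l n a j0] a j0 j0_l by blast
  thus ?thesis
    using that u(1,2) ul j0_l by blast
qed

lemma own_choice_one_if_pending_rival:
  assumes t: "t < length Ord" and ji: "Ord ! t = (j0, i)" and reserved: "one_reserved t"
    and rival: "pending_rival n Ord t i"
  shows "optimistic_choice n p profile (state t) j0 i = 1"
proof -
  obtain u l d where u: "t < u" "u < length Ord" and ul: "Ord ! u = (j0, l)"
    and j0_l: "state t j0 l = None" and d: "d \<in> remaining n (state t) l" "d \<noteq> 1"
    using later_spare_item[OF t ji rival] by blast
  have l: "l \<in> {1..p}"
    by (rule pick_category[OF u(2) ul])
  let ?Q = "available_bundle n p (state t) j0"
  let ?dev = "all_ones(l := d)"
  have Q_dev: "?Q ?dev"
    by (rule available_bundle_fun_upd[OF all_ones_available[OF less_imp_le[OF t] reserved] l j0_l d(1)])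
  have "?dev \<in> set deviants"
    using Q_dev d(2) l unfolding set_deviants available_bundle_def
    by (auto simp: all_ones_def dest: fun_cong[of _ _ l])
  hence "filter ?Q deviants \<noteq> []"
    using Q_dev by (metis filter_empty_conv)
  hence top: "hd (filter ?Q (profile j0)) = hd (filter ?Q deviants)"
    by (simp add: profile_def own_pref_def)
  from hd_filter_key_le[where Q = ?Q, OF sorted_deviants \<open>?dev \<in> set deviants\<close> Q_dev]
  have "deviation_weight (hd (filter ?Q deviants)) \<le> length Ord - u"
    unfolding deviation_weight_single[OF u(2) ul d(2)] .
  also have "\<dots> < length Ord - t"
    using u by simp
  finally have "hd (filter ?Q deviants) i = 1"
    using deviation_weight_ge[OF t ji] by (meson not_less)
  thus ?thesis
    unfolding optimistic_choice_def top .
qed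

lemma own_choice_one:
  "t < length Ord \<Longrightarrow> Ord ! t = (j0, i) \<Longrightarrow> one_reserved t \<Longrightarrow>
    optimistic_choice n p profile (state t) j0 i = 1"
  using own_choice_one_if_pending_rival own_choice_one_if_no_pending_rival by blast

lemma one_reserved_run: "t \<le> length Ord \<Longrightarrow> one_reserved t"
proof (induction t)
  case 0
  show ?case by (simp add: one_reserved_def)
next
  case (Suc t)
  hence t: "t < length Ord" and reserved: "one_reserved t" by simp_all
  obtain a i where ji: "Ord ! t = (a, i)" by fastforce
  define c where "c = optimistic_choice n p profile (state t) a i"
  have step: "state (Suc t) a' l = (if a' = a \<and> l = i then Some c else state t a' l)" for a' l
    using run_prefix_Suc[OF t] ji by (simp add: csam_step_apply c_def)
  have taken: "set (take (Suc t) Ord) = insert (a, i) (set (take t Ord))"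
    using t ji by (simp add: take_Suc_conv_app_nth)
  have "c = 1" if "a = j0"
    using own_choice_one[OF t _ reserved] ji that unfolding c_def by simp
  moreover have "c \<noteq> 1" if "a \<noteq> j0" and "(j0, i) \<notin> set (take t Ord)"
    using rival_choice_ne_one[OF t ji that] unfolding c_def .
  ultimately show ?case
    using reserved unfolding one_reserved_def step taken by auto
qed

lemma csam_alloc_own: "csam_alloc n p Ord profile j0 = all_ones"
proof
  fix l
  show "csam_alloc n p Ord profile j0 l = all_ones l"
  proof (cases "l \<in> {1..p}")
    case True
    have A: "consistent_state n (state (length Ord)) (set Ord)"
      using state_consistent[of "length Ord"] by simp
    have "(j0, l) \<in> set Ord"
      using set_Ord j0 True by simp
    then obtain d where d: "state (length Ord) j0 l = Some d"
      using consistent_state_defined[OF A] by blast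
    hence "d = 1"
      using one_reserved_run[of "length Ord"] unfolding one_reserved_def by blast
    thus ?thesis
      using d True by (simp add: csam_alloc_def all_ones_def csam_run_eq_run_prefix)
  qed (simp only: csam_alloc_def all_ones_def if_not_P if_False)
qed

lemma Rank_csam_alloc_own: "Rank (profile j0) (csam_alloc n p Ord profile j0) = n ^ p"
  by (simp add: csam_alloc_own profile_def Rank_own_pref_all_ones)

end

theorem proposition3:
  fixes n p :: nat and Ord :: "(nat \<times> nat) list"
  assumes "n \<ge> 1" and "p \<ge> 1"
    and "is_csam_order n p Ord"
  shows "worst_case_egalitarian_rank n p Ord = n ^ p"
proof -
  obtain j0 where j0: "j0 \<in> {1..n}" and "never_cornered n Ord j0"
    using ex_never_cornered_agent[OF assms(1,3)] by blast
  obtain L where "distinct L" and "set L = bundles n p"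
    using finite_distinct_list[OF finite_bundles] by metis
  then interpret bottom_rank_profile n p Ord j0 L
    using assms j0 \<open>never_cornered n Ord j0\<close> by unfold_locales auto
  let ?ranks = "{Rank (P j) (csam_alloc n p Ord P j) | P j. is_profile n p P \<and> j \<in> {1..n}}"
  have bounded: "\<forall>r\<in>?ranks. r \<le> n ^ p"
    using Rank_csam_alloc_le[OF _ assms(3)] by blast
  hence "finite ?ranks"
    by (meson finite_atMost finite_subset subsetI atMost_iff)
  moreover have "n ^ p \<in> ?ranks"
    using Rank_csam_alloc_own is_profile_profile j0 by force
  ultimately show ?thesis
    unfolding worst_case_egalitarian_rank_def using bounded by (intro Max_eqI) auto
qed

end
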